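(* Let $r$ be an ELP rule of the form $A \leftarrow B, \neg C, \mathbf{not}\, D, \mathbf{not}\,\neg E, \neg\mathbf{not}\, F, \neg\mathbf{not}\,\neg G$, where $A,B,C,D,E,F,G$ are finite sets of atoms. Then $r$ is tautological if and only if at least one of the following holds: (a) $A \cap B \neq \emptyset$; (b) $B \cap (C \cup G) \neq \emptyset$; (c) $C \cap F \neq \emptyset$; (d) $D \cap F \neq \emptyset$; (e) $E \cap G \neq \emptyset$; (f) $F\cap G\neq\emptyset$.
   Context: Notation for the rule: the head is the disjunction of the atoms in $A$; the body is the conjunction of the atoms in $B$, the literals $\neg c$ ($c\in C$), the epistemic literals $\mathbf{not}\,d$ ($d\in D$), $\mathbf{not}\,\neg e$ ($e\in E$), and the negated epistemic literals $\neg\mathbf{not}\,f$ ($f\in F$), $\neg\mathbf{not}\,\neg g$ ($g\in G$). Definitions: a literal over atoms $\mathcal{A}$ is $a$ or $\neg a$; interpretations $I\subseteq\mathcal{A}$, $I\models a$ iff $a\in I$, $I\models\neg\ell$ iff $I\not\models\ell$. A plain logic program $(\mathcal{A},\mathcal{R})$ has rules $a_1\vee\cdots\vee a_l\leftarrow a_{l+1},\ldots,a_m,\neg\ell_1,\ldots,\neg\ell_n$; $M\models r$ iff body true implies some head atom in $M$. GL-reduct $\Pi^I$ keeps $H(r)\leftarrow B^+(r)$ (positive body atoms) for rules all of whose negated body elements $\neg\ell$ are true in $I$ ($\neg\neg\neg a$ treated as $\neg a$); answer sets are models $M$ with no $M'\subset M$ modelling $\Pi^M$. An ELP is $(\mathcal{A},\mathcal{E},\mathcal{R})$,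 $\mathcal{E}$ a set of epistemic literals $\mathbf{not}\,\ell$, rules $a_1\vee\cdots\vee a_k\leftarrow\ell_1,\ldots,\ell_m,\xi_1,\ldots,\xi_j,\neg\xi_{j+1},\ldots,\neg\xi_n$ with $\xi_i\in\mathcal{E}$. A guess $\Phi\subseteq\mathcal{E}$; $\mathcal{I}$ is $\Phi$-compatible iff nonempty, each $\mathbf{not}\,\ell\in\Phi$ is falsified ($I\not\models\ell$) by some $I\in\mathcal{I}$, and each $\mathbf{not}\,\ell\in\mathcal{E}\setminus\Phi$ has $\ell$ true in all $I\in\mathcal{I}$. Epistemic reduct $\Pi^\Phi$: replace $\mathbf{not}\,\ell\in\Phi$ by $\top$ and remaining $\mathbf{not}$ by $\neg$. A candidate world view is $AS(\Pi^\Phi)$ when $\Phi$-compatible; a world view is a candidate world view with subset-maximal associated guess. ELPs $\Pi_1,\Pi_2$ are strongly equivalent iff for every ELP $\Pi$, $\Pi_1\cup\Pi$ and $\Pi_2\cup\Pi$ (componentwise union) have the same world views. An ELP rule $r$ over $\mathcal{A}$ and $\mathcal{E}$ (containing the atoms and epistemic literals of $r$) is tautological iff $(\mathcal{A},\mathcal{E},\{r\})$ is strongly equivalent to $(\mathcal{A},\mathcal{E},\emptyset)$. *)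

theory Defs
  imports Main
begin

text \<open>A literal over atoms is an atom a (Pos a) or its negation (Neg a).
  An epistemic literal "not l" is represented by its literal l.\<close>

datatype 'a lit = Pos 'a | Neg 'a

fun lsat :: "'a set \<Rightarrow> 'a lit \<Rightarrow> bool" where
  "lsat I (Pos a) = (a \<in> I)"
| "lsat I (Neg a) = (a \<notin> I)"

fun negl :: "'a lit \<Rightarrow> 'a lit" where
  "negl (Pos a) = Neg a"
| "negl (Neg a) = Pos a"

fun lit_atom :: "'a lit \<Rightarrow> 'a" where
  "lit_atom (Pos a) = a"
| "lit_atom (Neg a) = a"

text \<open>Plain rule: head atoms; positive body atoms; pneg = the set of literals l
  such that the body contains the negated element (neg l).  Here neg (Neg a),
  i.e. double negation of a, is allowed; triple negation of a is identified with neg a,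
  i.e. with the entry Pos a.\<close>

datatype 'a prule = PRule (phead: "'a set") (ppos: "'a set") (pneg: "'a lit set")

definition pbody_true :: "'a set \<Rightarrow> 'a prule \<Rightarrow> bool" where
  "pbody_true M r \<longleftrightarrow> ppos r \<subseteq> M \<and> (\<forall>l\<in>pneg r. \<not> lsat M l)"

definition psat :: "'a set \<Rightarrow> 'a prule \<Rightarrow> bool" where
  "psat M r \<longleftrightarrow> (pbody_true M r \<longrightarrow> phead r \<inter> M \<noteq> {})"

definition pmodel :: "'a set \<Rightarrow> 'a prule set \<Rightarrow> bool" where
  "pmodel M P \<longleftrightarrow> (\<forall>r\<in>P. psat M r)"

definition gl_reduct :: "'a prule set \<Rightarrow> 'a set \<Rightarrow> 'a prule set" where
  "gl_reduct P I = {PRule (phead r) (ppos r) {} | r. r \<in> P \<and> (\<forall>l\<in>pneg r. \<not> lsat I l)}"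

definition answer_sets :: "'a set \<Rightarrow> 'a prule set \<Rightarrow> 'a set set" where
  "answer_sets At P = {M. M \<subseteq> At \<and> pmodel M (gl_reduct P M) \<and>
       \<not> (\<exists>M'. M' \<subset> M \<and> pmodel M' (gl_reduct P M))}"

text \<open>ELP rule  H <- Bp, neg Bn, E+, neg E-  where E+ / E- are sets of epistemic
  literals (not l), each represented by the literal l.\<close>

datatype 'a erule = ERule (ehead: "'a set") (ebpos: "'a set") (ebneg: "'a set")
                          (eepos: "'a lit set") (eeneg: "'a lit set")

definition erule_atoms :: "'a erule \<Rightarrow> 'a set" where
  "erule_atoms r = ehead r \<union> ebpos r \<union> ebneg r \<union> lit_atom ` (eepos r \<union> eeneg r)"

definition erule_elits :: "'a erule \<Rightarrow> 'a lit set" where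
  "erule_elits r = eepos r \<union> eeneg r"

type_synonym 'a elp = "'a set \<times> 'a lit set \<times> 'a erule set"

definition is_elp :: "'a elp \<Rightarrow> bool" where
  "is_elp P \<longleftrightarrow> (case P of (At, Ep, R) \<Rightarrow>
     finite At \<and> finite Ep \<and> finite R \<and>
     (\<forall>r\<in>R. erule_atoms r \<subseteq> At \<and> erule_elits r \<subseteq> Ep))"

definition elp_union :: "'a elp \<Rightarrow> 'a elp \<Rightarrow> 'a elp" where
  "elp_union P Q = (case P of (A1, E1, R1) \<Rightarrow> case Q of (A2, E2, R2) \<Rightarrow>
      (A1 \<union> A2, E1 \<union> E2, R1 \<union> R2))"

text \<open>Epistemic reduct: not l in Phi becomes true (dropped), other not l becomes neg l;
  neg not l with not l in Phi makes the body false (rule dropped); otherwise it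
  becomes neg neg l, i.e. pneg entry (negl l).\<close>
definition epi_reduct :: "'a erule set \<Rightarrow> 'a lit set \<Rightarrow> 'a prule set" where
  "epi_reduct R Phi = {PRule (ehead r) (ebpos r)
        (Pos ` ebneg r \<union> (eepos r - Phi) \<union> negl ` eeneg r) | r. r \<in> R \<and> eeneg r \<inter> Phi = {}}"

definition compatible :: "'a lit set \<Rightarrow> 'a lit set \<Rightarrow> 'a set set \<Rightarrow> bool" where
  "compatible Ep Phi W \<longleftrightarrow> W \<noteq> {} \<and>
     (\<forall>l\<in>Phi. \<exists>I\<in>W. \<not> lsat I l) \<and>
     (\<forall>l\<in>Ep - Phi. \<forall>I\<in>W. lsat I l)"

definition candidate_wv :: "'a elp \<Rightarrow> 'a lit set \<Rightarrow> 'a set set \<Rightarrow> bool" where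
  "candidate_wv P Phi W \<longleftrightarrow> (case P of (At, Ep, R) \<Rightarrow>
     Phi \<subseteq> Ep \<and> W = answer_sets At (epi_reduct R Phi) \<and> compatible Ep Phi W)"

definition world_views :: "'a elp \<Rightarrow> 'a set set set" where
  "world_views P = {W. \<exists>Phi. candidate_wv P Phi W \<and>
      \<not> (\<exists>Phi' W'. candidate_wv P Phi' W' \<and> Phi \<subset> Phi')}"

definition strongly_equiv :: "'a elp \<Rightarrow> 'a elp \<Rightarrow> bool" where
  "strongly_equiv P1 P2 \<longleftrightarrow>
     (\<forall>Q. is_elp Q \<longrightarrow> world_views (elp_union P1 Q) = world_views (elp_union P2 Q))"

definition tautological :: "'a set \<Rightarrow> 'a lit set \<Rightarrow> 'a erule \<Rightarrow> bool" where
  "tautological At Ep r \<longleftrightarrow> strongly_equiv (At, Ep, {r}) (At, Ep, {})"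

definition mk_rule :: "'a set \<Rightarrow> 'a set \<Rightarrow> 'a set \<Rightarrow> 'a set \<Rightarrow> 'a set \<Rightarrow> 'a set \<Rightarrow> 'a set \<Rightarrow> 'a erule" where
  "mk_rule A B C D E F G = ERule A B C (Pos ` D \<union> Neg ` E) (Pos ` F \<union> Neg ` G)"

end

theory Submission
  imports Defs
begin

text \<open>If one of (a)--(f) holds, then under every guess the epistemic reduct either drops the rule
  (a literal of \<open>F\<close> or \<open>\<not>G\<close> is guessed) or turns it into a plain rule that no \<open>M' \<subseteq> M\<close>
  can violate once its negative body holds in \<open>M\<close>: its head meets its positive body, or its
  body asks for an atom to be both inside and outside \<open>M\<close>. Such a rule changes no answer set,
  hence no world view, of any program it is added to.

  Conversely, if none holds, take fresh atoms \<open>p0, p1, p2\<close> and an objective program \<open>Q\<close> with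
  answer sets \<open>{p0} \<union> B \<union> F\<close>, \<open>{p1} \<union> E \<union> F\<close>, \<open>{p2} \<union> F\<close>. They form the only world view of
  \<open>Q\<close>, and its guess contains \<open>not D\<close>, \<open>not \<not>E\<close> but no literal of \<open>F\<close>, \<open>\<not>G\<close>, so adding the
  rule adds exactly the plain rule \<open>A \<leftarrow> B, \<not>C, \<not>\<not>F, \<not>G\<close> to the reduct. If \<open>A \<inter> F = {}\<close>, this
  rule kills the answer set \<open>{p0} \<union> B \<union> F\<close>. Otherwise fix \<open>f \<in> A \<inter> F\<close>, make all atoms of
  \<open>A \<inter> F\<close> equivalent to \<open>f\<close> and add the constraint \<open>\<leftarrow> p0, \<not>f\<close>: then \<open>{p0} \<union> B \<union> F\<close> is no
  longer an answer set of \<open>Q\<close>, since \<open>{p0} \<union> B \<union> (F - A)\<close> is a smaller model of its reduct, but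
  it becomes one with the new rule, which makes \<open>B\<close> bring along some, hence every, atom of
  \<open>A \<inter> F\<close>.\<close>

lemma pmodel_gl_reduct_iff:
  "pmodel M' (gl_reduct P M) \<longleftrightarrow>
   (\<forall>r\<in>P. (\<forall>l\<in>pneg r. \<not> lsat M l) \<longrightarrow> ppos r \<subseteq> M' \<longrightarrow> phead r \<inter> M' \<noteq> {})"
  unfolding pmodel_def gl_reduct_def psat_def pbody_true_def by fastforce

lemma pmodel_gl_reduct_insert:
  "pmodel M' (gl_reduct (insert r P) M) \<longleftrightarrow>
   ((\<forall>l\<in>pneg r. \<not> lsat M l) \<longrightarrow> ppos r \<subseteq> M' \<longrightarrow> phead r \<inter> M' \<noteq> {}) \<and>
   pmodel M' (gl_reduct P M)"
  by (simp add: pmodel_gl_reduct_iff)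

lemma pmodel_gl_reduct_Un:
  "pmodel M' (gl_reduct (P \<union> Q) M) \<longleftrightarrow> pmodel M' (gl_reduct P M) \<and> pmodel M' (gl_reduct Q M)"
  by (auto simp: pmodel_gl_reduct_iff)

lemma answer_sets_iff:
  "M \<in> answer_sets X P \<longleftrightarrow> M \<subseteq> X \<and> pmodel M (gl_reduct P M) \<and>
     (\<forall>M' \<subseteq> M. pmodel M' (gl_reduct P M) \<longrightarrow> M' = M)"
  by (auto simp: answer_sets_def psubset_eq)

lemma answer_sets_insert_redundant:
  assumes "\<And>M M'. \<forall>l\<in>pneg r. \<not> lsat M l \<Longrightarrow> M' \<subseteq> M \<Longrightarrow> ppos r \<subseteq> M' \<Longrightarrow> phead r \<inter> M' \<noteq> {}"
  shows "answer_sets X (insert r P) = answer_sets X P"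
proof -
  have "pmodel M' (gl_reduct (insert r P) M) \<longleftrightarrow> pmodel M' (gl_reduct P M)" if "M' \<subseteq> M" for M M'
    using assms that by (auto simp: pmodel_gl_reduct_insert)
  then show ?thesis by (auto simp: answer_sets_iff)
qed

lemma epi_reduct_insert:
  "epi_reduct (insert r R) Phi = (if eeneg r \<inter> Phi = {} then
     insert (PRule (ehead r) (ebpos r) (Pos ` ebneg r \<union> (eepos r - Phi) \<union> negl ` eeneg r))
       (epi_reduct R Phi)
     else epi_reduct R Phi)"
  by (auto simp: epi_reduct_def)

definition objective :: "'a erule set \<Rightarrow> bool" where
  "objective R \<longleftrightarrow> (\<forall>r\<in>R. eepos r = {} \<and> eeneg r = {})"

definition plain_of :: "'a erule set \<Rightarrow> 'a prule set" where
  "plain_of R = (\<lambda>r. PRule (ehead r) (ebpos r) (Pos ` ebneg r)) ` R"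

lemma epi_reduct_objective: "objective R \<Longrightarrow> epi_reduct R Phi = plain_of R"
  by (auto simp: objective_def epi_reduct_def plain_of_def)

definition guess_of :: "'a lit set \<Rightarrow> 'a set set \<Rightarrow> 'a lit set" where
  "guess_of Ep W = {l \<in> Ep. \<exists>I\<in>W. \<not> lsat I l}"

lemma guess_of_subset: "guess_of Ep W \<subseteq> Ep"
  by (auto simp: guess_of_def)

lemma compatible_imp_guess_of: "compatible Ep Phi W \<Longrightarrow> Phi \<subseteq> Ep \<Longrightarrow> Phi = guess_of Ep W"
  unfolding compatible_def guess_of_def by blast

lemma compatible_guess_of: "W \<noteq> {} \<Longrightarrow> compatible Ep (guess_of Ep W) W"
  unfolding compatible_def guess_of_def by blast

lemma world_view_answer_sets:
  assumes "W \<in> world_views (At, Ep, R)"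
  shows "W = answer_sets At (epi_reduct R (guess_of Ep W))"
proof -
  obtain Phi where "Phi \<subseteq> Ep" "W = answer_sets At (epi_reduct R Phi)" "compatible Ep Phi W"
    using assms by (auto simp: world_views_def candidate_wv_def)
  then show ?thesis using compatible_imp_guess_of by metis
qed

lemma world_view_objective:
  assumes "objective R" "W = answer_sets At (plain_of R)" "W \<noteq> {}"
  shows "W \<in> world_views (At, Ep, R)"
proof -
  have "candidate_wv (At, Ep, R) Phi W' \<longleftrightarrow> W' = W \<and> Phi \<subseteq> Ep \<and> compatible Ep Phi W" for Phi W'
    using assms(1,2) by (auto simp: candidate_wv_def epi_reduct_objective)
  then have "candidate_wv (At, Ep, R) Phi W' \<longleftrightarrow> W' = W \<and> Phi = guess_of Ep W" for Phi W'
    using compatible_imp_guess_of compatible_guess_of[OF assms(3)] guess_of_subset by metis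
  then show ?thesis unfolding world_views_def by blast
qed

lemma tautological_if_reduct_redundant:
  assumes "\<And>X R Phi. answer_sets X (epi_reduct (insert r R) Phi) = answer_sets X (epi_reduct R Phi)"
  shows "tautological At Ep r"
  unfolding tautological_def strongly_equiv_def
proof (intro allI impI)
  fix Q :: "'a elp"
  obtain AQ EQ RQ where Q: "Q = (AQ, EQ, RQ)" by (cases Q)
  have "candidate_wv (At \<union> AQ, Ep \<union> EQ, insert r RQ) = candidate_wv (At \<union> AQ, Ep \<union> EQ, RQ)"
    by (intro ext) (simp add: candidate_wv_def assms)
  then show "world_views (elp_union (At, Ep, {r}) Q) = world_views (elp_union (At, Ep, {}) Q)"
    by (simp add: Q elp_union_def world_views_def)
qed

lemma answer_sets_insert_mk_rule_redundant:
  assumes "A \<inter> B \<noteq> {} \<or> B \<inter> (C \<union> G) \<noteq> {} \<or> C \<inter> F \<noteq> {} \<or>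
    D \<inter> F \<noteq> {} \<or> E \<inter> G \<noteq> {} \<or> F \<inter> G \<noteq> {}"
  shows "answer_sets X (epi_reduct (insert (mk_rule A B C D E F G) R) Phi) =
    answer_sets X (epi_reduct R Phi)"
proof (cases "(Pos ` F \<union> Neg ` G) \<inter> Phi = {}")
  case False
  then show ?thesis by (simp add: epi_reduct_insert mk_rule_def)
next
  case True
  let ?r = "PRule A B (Pos ` C \<union> (Pos ` D \<union> Neg ` E - Phi) \<union> negl ` (Pos ` F \<union> Neg ` G))"
  have body_iff: "(\<forall>l\<in>pneg ?r. \<not> lsat M l) \<longleftrightarrow> C \<inter> M = {} \<and> F \<subseteq> M \<and> G \<inter> M = {} \<and>
      (\<forall>d\<in>D. Pos d \<notin> Phi \<longrightarrow> d \<notin> M) \<and> (\<forall>e\<in>E. Neg e \<notin> Phi \<longrightarrow> e \<in> M)" for M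
    by (auto simp: image_Un image_image ball_Un) force+
  have unguessed: "\<forall>f\<in>F. Pos f \<notin> Phi" "\<forall>g\<in>G. Neg g \<notin> Phi"
    using True by auto
  have "phead ?r \<inter> M' \<noteq> {}"
    if "\<forall>l\<in>pneg ?r. \<not> lsat M l" "M' \<subseteq> M" "ppos ?r \<subseteq> M'" for M M'
    using assms unguessed that(1)[unfolded body_iff] that(2,3) by auto
  then have "answer_sets X (insert ?r (epi_reduct R Phi)) = answer_sets X (epi_reduct R Phi)"
    by (rule answer_sets_insert_redundant)
  with True show ?thesis by (simp add: epi_reduct_insert mk_rule_def)
qed

text \<open>The plain rule \<open>A \<leftarrow> B, \<not>C, \<not>\<not>F, \<not>G\<close>.\<close>

definition mk_rule_reduct :: "'a set \<Rightarrow> 'a set \<Rightarrow> 'a set \<Rightarrow> 'a set \<Rightarrow> 'a set \<Rightarrow> 'a prule" where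
  "mk_rule_reduct A B C F G = PRule A B (Pos ` C \<union> Neg ` F \<union> Pos ` G)"

lemma epi_reduct_insert_mk_rule:
  assumes "Pos ` D \<union> Neg ` E \<subseteq> Phi" "(Pos ` F \<union> Neg ` G) \<inter> Phi = {}"
  shows "epi_reduct (insert (mk_rule A B C D E F G) R) Phi =
    insert (mk_rule_reduct A B C F G) (epi_reduct R Phi)"
proof -
  have "Pos ` C \<union> (Pos ` D \<union> Neg ` E - Phi) \<union> negl ` (Pos ` F \<union> Neg ` G) =
      Pos ` C \<union> Neg ` F \<union> Pos ` G"
    using assms(1) by (auto simp: image_Un image_image)
  with assms(2) show ?thesis
    by (simp add: epi_reduct_insert mk_rule_def mk_rule_reduct_def)
qed

lemma pmodel_gl_reduct_insert_mk_rule_reduct: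
  "pmodel M' (gl_reduct (insert (mk_rule_reduct A B C F G) P) M) \<longleftrightarrow>
   (C \<inter> M = {} \<and> F \<subseteq> M \<and> G \<inter> M = {} \<longrightarrow> B \<subseteq> M' \<longrightarrow> A \<inter> M' \<noteq> {}) \<and>
   pmodel M' (gl_reduct P M)"
  by (auto simp: pmodel_gl_reduct_insert mk_rule_reduct_def ball_Un)

lemma not_answer_set_insert_mk_rule_reduct:
  assumes "C \<inter> M = {}" "F \<subseteq> M" "G \<inter> M = {}" "B \<subseteq> M" "A \<inter> M = {}"
  shows "M \<notin> answer_sets X (insert (mk_rule_reduct A B C F G) P)"
  using assms by (auto simp: answer_sets_iff pmodel_gl_reduct_insert_mk_rule_reduct)

lemma tautological_mk_rule_keeps_answer_sets:
  assumes taut: "tautological At Ep (mk_rule A B C D E F G)"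
    and elits: "Pos ` D \<union> Neg ` E \<subseteq> Ep"
    and R: "is_elp (X, {}, R)" "At \<subseteq> X" "objective R"
    and W: "W = answer_sets X (plain_of R)" "W \<noteq> {}"
    and FG: "\<forall>I\<in>W. F \<subseteq> I \<and> G \<inter> I = {}"
    and D: "\<forall>d\<in>D. \<exists>I\<in>W. d \<notin> I" and E: "\<forall>e\<in>E. \<exists>I\<in>W. e \<in> I"
  shows "answer_sets X (insert (mk_rule_reduct A B C F G) (plain_of R)) = W"
proof -
  let ?r = "mk_rule A B C D E F G"
  have "world_views (elp_union (At, Ep, {?r}) (X, {}, R)) = world_views (elp_union (At, Ep, {}) (X, {}, R))"
    using taut R(1) unfolding tautological_def strongly_equiv_def by blast
  then have "world_views (X, Ep, insert ?r R) = world_views (X, Ep, R)"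
    using R(2) by (simp add: elp_union_def sup_absorb2)
  moreover have "W \<in> world_views (X, Ep, R)"
    using world_view_objective R(3) W .
  ultimately have "W = answer_sets X (epi_reduct (insert ?r R) (guess_of Ep W))"
    by (simp add: world_view_answer_sets)
  also have "epi_reduct (insert ?r R) (guess_of Ep W) = insert (mk_rule_reduct A B C F G) (plain_of R)"
  proof -
    have "Pos ` D \<union> Neg ` E \<subseteq> guess_of Ep W"
      using elits D E by (auto simp: guess_of_def)
    moreover have "(Pos ` F \<union> Neg ` G) \<inter> guess_of Ep W = {}"
      using FG by (force simp: guess_of_def)
    ultimately
    show ?thesis by (simp add: epi_reduct_insert_mk_rule epi_reduct_objective R(3))
  qed
  finally show ?thesis by simp
qed

definition guarded_choice :: "'a \<Rightarrow> 'a \<Rightarrow> 'a \<Rightarrow> 'a set \<Rightarrow> 'a set \<Rightarrow> 'a set \<Rightarrow> 'a erule set" where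
  "guarded_choice p0 p1 p2 S0 S1 S2 = insert (ERule {p0, p1, p2} {} {} {} {})
     ((\<lambda>x. ERule {x} {p0} {} {} {}) ` S0 \<union> (\<lambda>x. ERule {x} {p1} {} {} {}) ` S1 \<union>
      (\<lambda>x. ERule {x} {p2} {} {} {}) ` S2)"

definition equivalence_rules :: "'a \<Rightarrow> 'a set \<Rightarrow> 'a erule set" where
  "equivalence_rules f K = (\<lambda>x. ERule {x} {f} {} {} {}) ` K \<union> (\<lambda>x. ERule {f} {x} {} {} {}) ` K"

definition constrained_choice ::
  "'a \<Rightarrow> 'a \<Rightarrow> 'a \<Rightarrow> 'a set \<Rightarrow> 'a set \<Rightarrow> 'a set \<Rightarrow> 'a \<Rightarrow> 'a set \<Rightarrow> 'a erule set" where
  "constrained_choice p0 p1 p2 T0 S1 S2 f K =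
     guarded_choice p0 p1 p2 T0 S1 S2 \<union> equivalence_rules f K \<union> {ERule {} {p0} {f} {} {}}"

lemma pmodel_gl_reduct_guarded_choice:
  "pmodel M' (gl_reduct (plain_of (guarded_choice p0 p1 p2 S0 S1 S2)) M) \<longleftrightarrow>
   (p0 \<in> M' \<or> p1 \<in> M' \<or> p2 \<in> M') \<and>
   (p0 \<in> M' \<longrightarrow> S0 \<subseteq> M') \<and> (p1 \<in> M' \<longrightarrow> S1 \<subseteq> M') \<and> (p2 \<in> M' \<longrightarrow> S2 \<subseteq> M')"
  by (simp add: pmodel_gl_reduct_iff plain_of_def guarded_choice_def ball_Un) blast

lemma pmodel_gl_reduct_constrained_choice:
  "pmodel M' (gl_reduct (plain_of (constrained_choice p0 p1 p2 T0 S1 S2 f K)) M) \<longleftrightarrow>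
   pmodel M' (gl_reduct (plain_of (guarded_choice p0 p1 p2 T0 S1 S2)) M) \<and>
   (f \<in> M' \<longrightarrow> K \<subseteq> M') \<and> (K \<inter> M' \<noteq> {} \<longrightarrow> f \<in> M') \<and> (f \<notin> M \<longrightarrow> p0 \<notin> M')"
  unfolding constrained_choice_def plain_of_def image_Un pmodel_gl_reduct_Un
  by (auto simp: pmodel_gl_reduct_iff equivalence_rules_def ball_Un)

lemma answer_sets_eqI:
  assumes "\<And>I. I \<in> W \<Longrightarrow> I \<subseteq> X"
    and model: "\<And>I. I \<in> W \<Longrightarrow> pmodel I (gl_reduct P I)"
    and minimal: "\<And>I M'. I \<in> W \<Longrightarrow> M' \<subseteq> I \<Longrightarrow> pmodel M' (gl_reduct P I) \<Longrightarrow> M' = I"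
    and not_minimal: "\<And>M. pmodel M (gl_reduct P M) \<Longrightarrow> M \<notin> W \<Longrightarrow> \<exists>M'\<subset>M. pmodel M' (gl_reduct P M)"
  shows "answer_sets X P = W"
proof (intro set_eqI iffI)
  fix M
  assume "M \<in> answer_sets X P"
  then have "pmodel M (gl_reduct P M)" "\<forall>M'\<subseteq>M. pmodel M' (gl_reduct P M) \<longrightarrow> M' = M"
    by (auto simp: answer_sets_iff)
  with not_minimal show "M \<in> W" by blast
next
  fix M
  assume "M \<in> W"
  with assms(1) model minimal show "M \<in> answer_sets X P"
    unfolding answer_sets_iff by blast
qed

lemma answer_sets_guarded_choice:
  assumes "distinct [p0, p1, p2]" "{p0, p1, p2} \<inter> (S0 \<union> S1 \<union> S2) = {}"
    and "{p0, p1, p2} \<union> S0 \<union> S1 \<union> S2 \<subseteq> X"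
  shows "answer_sets X (plain_of (guarded_choice p0 p1 p2 S0 S1 S2)) =
    {insert p0 S0, insert p1 S1, insert p2 S2}" (is "answer_sets X ?P = ?W")
proof (rule answer_sets_eqI)
  show "I \<subseteq> X" if "I \<in> ?W" for I
    using that assms(3) by auto
  have model: "pmodel I (gl_reduct ?P M)" if "I \<in> ?W" for I M
    using that assms(1,2) by (auto simp: pmodel_gl_reduct_guarded_choice)
  then show "pmodel I (gl_reduct ?P I)" if "I \<in> ?W" for I
    using that .
  show "M' = I" if "I \<in> ?W" "M' \<subseteq> I" "pmodel M' (gl_reduct ?P I)" for I M'
  proof -
    note M'_model = that(3)[unfolded pmodel_gl_reduct_guarded_choice]
    from that(1) consider "I = insert p0 S0" | "I = insert p1 S1" | "I = insert p2 S2" by blast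
    then show ?thesis
      by cases (use that(2) M'_model assms(1,2) in auto)
  qed
  show "\<exists>M'\<subset>M. pmodel M' (gl_reduct ?P M)" if "pmodel M (gl_reduct ?P M)" "M \<notin> ?W" for M
  proof -
    have "\<exists>I\<in>?W. I \<subseteq> M"
      using that(1) by (auto simp: pmodel_gl_reduct_guarded_choice)
    then obtain I where "I \<in> ?W" "I \<subseteq> M" ..
    moreover from \<open>I \<in> ?W\<close> that(2) have "I \<noteq> M" by blast
    ultimately show ?thesis using model by blast
  qed
qed

lemma answer_sets_constrained_choice:
  assumes "distinct [p0, p1, p2]" "{p0, p1, p2} \<inter> (T0 \<union> S1 \<union> S2) = {}"
    and "f \<in> K" "K \<subseteq> S1" "K \<subseteq> S2" "K \<inter> T0 = {}"
    and "{p1, p2} \<union> S1 \<union> S2 \<subseteq> X"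
  shows "answer_sets X (plain_of (constrained_choice p0 p1 p2 T0 S1 S2 f K)) =
    {insert p1 S1, insert p2 S2}" (is "answer_sets X ?P = ?W")
proof (rule answer_sets_eqI)
  note models = pmodel_gl_reduct_constrained_choice pmodel_gl_reduct_guarded_choice
  show "I \<subseteq> X" if "I \<in> ?W" for I
    using that assms(7) by auto
  have model: "pmodel I (gl_reduct ?P M)" if "I \<in> ?W" for I M
    using that assms(1-5) by (auto simp: models)
  then show "pmodel I (gl_reduct ?P I)" if "I \<in> ?W" for I
    using that .
  show "M' = I" if "I \<in> ?W" "M' \<subseteq> I" "pmodel M' (gl_reduct ?P I)" for I M'
  proof -
    note M'_model = that(3)[unfolded models]
    from that(1) consider "I = insert p1 S1" | "I = insert p2 S2" by blast
    then show ?thesis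
      by cases (use that(2) M'_model assms(1,2) in auto)
  qed
  show "\<exists>M'\<subset>M. pmodel M' (gl_reduct ?P M)" if "pmodel M (gl_reduct ?P M)" "M \<notin> ?W" for M
  proof (cases "p0 \<in> M")
    case True
    \<comment> \<open>The constraint puts \<open>f\<close> into \<open>M\<close> and is thereby switched off in the reduct.\<close>
    have "f \<in> M" "T0 \<subseteq> M" using that(1) True by (auto simp: models)
    then have "insert p0 T0 \<subset> M" "pmodel (insert p0 T0) (gl_reduct ?P M)"
      using True assms(1-4,6) by (auto simp: models)
    then show ?thesis by blast
  next
    case False
    with that(1) have "\<exists>I\<in>?W. I \<subseteq> M"
      by (auto simp: models)
    then obtain I where "I \<in> ?W" "I \<subseteq> M" ..
    moreover from \<open>I \<in> ?W\<close> that(2) have "I \<noteq> M" by blast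
    ultimately show ?thesis using model by blast
  qed
qed

lemma answer_set_insert_mk_rule_reduct_constrained_choice:
  assumes "distinct [p0, p1, p2]" "{p0, p1, p2} \<inter> (T0 \<union> K) = {}" "f \<in> K"
    and "B \<subseteq> T0" "A \<inter> insert p0 T0 = {}" "K \<subseteq> A"
    and "C \<inter> insert p0 (T0 \<union> K) = {}" "F \<subseteq> insert p0 (T0 \<union> K)" "G \<inter> insert p0 (T0 \<union> K) = {}"
    and "insert p0 (T0 \<union> K) \<subseteq> X"
  shows "insert p0 (T0 \<union> K) \<in>
    answer_sets X (insert (mk_rule_reduct A B C F G) (plain_of (constrained_choice p0 p1 p2 T0 S1 S2 f K)))"
    (is "?M0 \<in> answer_sets X ?P")
proof -
  note models = pmodel_gl_reduct_insert_mk_rule_reduct pmodel_gl_reduct_constrained_choice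
    pmodel_gl_reduct_guarded_choice
  have "pmodel ?M0 (gl_reduct ?P ?M0)"
    using assms(1-3,6) by (auto simp: models)
  moreover have "M' = ?M0" if "M' \<subseteq> ?M0" "pmodel M' (gl_reduct ?P ?M0)" for M'
  proof -
    have M'_model: "p0 \<in> M' \<or> p1 \<in> M' \<or> p2 \<in> M'" "p0 \<in> M' \<longrightarrow> T0 \<subseteq> M'"
      "B \<subseteq> M' \<longrightarrow> A \<inter> M' \<noteq> {}" "K \<inter> M' \<noteq> {} \<longrightarrow> f \<in> M'" "f \<in> M' \<longrightarrow> K \<subseteq> M'"
      using that(2) assms(7-9) by (simp_all add: models)
    have "p0 \<in> M'" using that(1) M'_model(1) assms(1,2) by auto
    then have "T0 \<subseteq> M'" using M'_model(2) by blast
    then obtain a where "a \<in> A" "a \<in> M'" using M'_model(3) assms(4) by blast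
    then have "a \<in> K" using that(1) assms(5) by blast
    then have "K \<subseteq> M'" using M'_model(4,5) \<open>a \<in> M'\<close> by blast
    with that(1) \<open>p0 \<in> M'\<close> \<open>T0 \<subseteq> M'\<close> show ?thesis by blast
  qed
  ultimately show ?thesis using assms(10) by (simp add: answer_sets_iff)
qed

lemma objective_guarded_choice: "objective (guarded_choice p0 p1 p2 S0 S1 S2)"
  by (auto simp: objective_def guarded_choice_def)

lemma objective_constrained_choice: "objective (constrained_choice p0 p1 p2 T0 S1 S2 f K)"
  by (auto simp: objective_def constrained_choice_def guarded_choice_def equivalence_rules_def)

lemma is_elp_guarded_choice:
  assumes "finite X" "{p0, p1, p2} \<union> S0 \<union> S1 \<union> S2 \<subseteq> X"
  shows "is_elp (X, {}, guarded_choice p0 p1 p2 S0 S1 S2)"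
proof -
  have "finite S0" "finite S1" "finite S2"
    using assms by (auto intro: finite_subset)
  with assms show ?thesis
    by (auto simp: is_elp_def guarded_choice_def erule_atoms_def erule_elits_def)
qed

lemma is_elp_constrained_choice:
  assumes "finite X" "{p0, p1, p2, f} \<union> T0 \<union> S1 \<union> S2 \<union> K \<subseteq> X"
  shows "is_elp (X, {}, constrained_choice p0 p1 p2 T0 S1 S2 f K)"
proof -
  have "finite T0" "finite S1" "finite S2" "finite K"
    using assms by (auto intro: finite_subset)
  with assms show ?thesis
    by (auto simp: is_elp_def constrained_choice_def guarded_choice_def equivalence_rules_def
        erule_atoms_def erule_elits_def)
qed

lemma ex_fresh_atoms:
  assumes "infinite (UNIV :: 'a set)" "finite At"
  obtains p0 p1 p2 :: 'a where "distinct [p0, p1, p2]" "{p0, p1, p2} \<inter> At = {}"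
proof -
  obtain P where "P \<subseteq> UNIV - At" "card P = 3"
    using infinite_arbitrarily_large Diff_infinite_finite assms by metis
  then show ?thesis using that by (auto simp: card_3_iff)
qed

context
  fixes At :: "'a set" and Ep :: "'a lit set" and A B C D E F G :: "'a set" and p0 p1 p2 :: 'a
  assumes finite_At: "finite At"
    and rule_atoms: "A \<union> B \<union> C \<union> D \<union> E \<union> F \<union> G \<subseteq> At"
    and rule_elits: "Pos ` D \<union> Neg ` E \<subseteq> Ep"
    and fresh: "distinct [p0, p1, p2]" "{p0, p1, p2} \<inter> At = {}"
    and conditions_fail: "A \<inter> B = {}" "B \<inter> (C \<union> G) = {}" "C \<inter> F = {}" "D \<inter> F = {}"
      "E \<inter> G = {}" "F \<inter> G = {}"
begin

lemma not_tautological_mk_rule_head_disjoint_F: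
  assumes "A \<inter> F = {}"
  shows "\<not> tautological At Ep (mk_rule A B C D E F G)"
proof
  assume taut: "tautological At Ep (mk_rule A B C D E F G)"
  let ?X = "{p0, p1, p2} \<union> At"
  let ?M0 = "insert p0 (B \<union> F)"
  define R where "R = guarded_choice p0 p1 p2 (B \<union> F) (E \<union> F) F"
  define W where "W = {?M0, insert p1 (E \<union> F), insert p2 F}"
  have W: "answer_sets ?X (plain_of R) = W"
    unfolding R_def W_def using fresh rule_atoms by (intro answer_sets_guarded_choice) auto
  have "answer_sets ?X (insert (mk_rule_reduct A B C F G) (plain_of R)) = W"
  proof (rule tautological_mk_rule_keeps_answer_sets[OF taut rule_elits])
    show "is_elp (?X, {}, R)"
      unfolding R_def using finite_At rule_atoms by (intro is_elp_guarded_choice) auto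
    show "objective R" unfolding R_def by (rule objective_guarded_choice)
    show "\<forall>I\<in>W. F \<subseteq> I \<and> G \<inter> I = {}" "\<forall>d\<in>D. \<exists>I\<in>W. d \<notin> I" "\<forall>e\<in>E. \<exists>I\<in>W. e \<in> I"
      using fresh rule_atoms conditions_fail by (auto simp: W_def)
  qed (use W in \<open>auto simp: W_def\<close>)
  moreover have "?M0 \<notin> answer_sets ?X (insert (mk_rule_reduct A B C F G) (plain_of R))"
    using conditions_fail assms fresh rule_atoms by (intro not_answer_set_insert_mk_rule_reduct) auto
  ultimately show False by (simp add: W_def)
qed

lemma not_tautological_mk_rule_head_meets_F:
  assumes "f \<in> A \<inter> F"
  shows "\<not> tautological At Ep (mk_rule A B C D E F G)"
proof
  assume taut: "tautological At Ep (mk_rule A B C D E F G)"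
  let ?X = "{p0, p1, p2} \<union> At"
  let ?M0 = "insert p0 ((B \<union> (F - A)) \<union> A \<inter> F)"
  define R where "R = constrained_choice p0 p1 p2 (B \<union> (F - A)) (E \<union> F) F f (A \<inter> F)"
  define W where "W = {insert p1 (E \<union> F), insert p2 F}"
  have W: "answer_sets ?X (plain_of R) = W"
    unfolding R_def W_def using fresh rule_atoms conditions_fail assms
    by (intro answer_sets_constrained_choice) auto
  have "answer_sets ?X (insert (mk_rule_reduct A B C F G) (plain_of R)) = W"
  proof (rule tautological_mk_rule_keeps_answer_sets[OF taut rule_elits])
    show "is_elp (?X, {}, R)"
      unfolding R_def using finite_At rule_atoms assms by (intro is_elp_constrained_choice) auto
    show "objective R" unfolding R_def by (rule objective_constrained_choice)
    show "\<forall>I\<in>W. F \<subseteq> I \<and> G \<inter> I = {}" "\<forall>d\<in>D. \<exists>I\<in>W. d \<notin> I" "\<forall>e\<in>E. \<exists>I\<in>W. e \<in> I"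
      using fresh rule_atoms conditions_fail by (auto simp: W_def)
  qed (use W in \<open>auto simp: W_def\<close>)
  moreover have "?M0 \<in> answer_sets ?X (insert (mk_rule_reduct A B C F G) (plain_of R))"
    unfolding R_def using conditions_fail assms fresh rule_atoms
    by (intro answer_set_insert_mk_rule_reduct_constrained_choice) auto
  moreover have "?M0 \<notin> W" using fresh rule_atoms by (auto simp: W_def)
  ultimately show False by simp
qed

lemma not_tautological_mk_rule: "\<not> tautological At Ep (mk_rule A B C D E F G)"
  using not_tautological_mk_rule_head_disjoint_F not_tautological_mk_rule_head_meets_F by blast

end

lemma erule_atoms_mk_rule: "erule_atoms (mk_rule A B C D E F G) = A \<union> B \<union> C \<union> D \<union> E \<union> F \<union> G"
  by (auto simp: erule_atoms_def mk_rule_def image_Un image_image)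

lemma erule_elits_mk_rule:
  "erule_elits (mk_rule A B C D E F G) = Pos ` D \<union> Neg ` E \<union> Pos ` F \<union> Neg ` G"
  by (auto simp: erule_elits_def mk_rule_def)

theorem theorem4:
  fixes At :: "'a set" and Ep :: "'a lit set" and A B C D E F G :: "'a set"
  assumes "infinite (UNIV :: 'a set)"
    and "finite A" "finite B" "finite C" "finite D" "finite E" "finite F" "finite G"
    and "finite At" "finite Ep"
    and "erule_atoms (mk_rule A B C D E F G) \<subseteq> At"
    and "erule_elits (mk_rule A B C D E F G) \<subseteq> Ep"
  shows "tautological At Ep (mk_rule A B C D E F G) \<longleftrightarrow>
           (A \<inter> B \<noteq> {} \<or> B \<inter> (C \<union> G) \<noteq> {} \<or> C \<inter> F \<noteq> {} \<or>
            D \<inter> F \<noteq> {} \<or> E \<inter> G \<noteq> {} \<or> F \<inter> G \<noteq> {})"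
proof
  assume taut: "tautological At Ep (mk_rule A B C D E F G)"
  obtain p0 p1 p2 where fresh: "distinct [p0, p1, p2]" "{p0, p1, p2} \<inter> At = {}"
    using ex_fresh_atoms assms(1,9) .
  show "A \<inter> B \<noteq> {} \<or> B \<inter> (C \<union> G) \<noteq> {} \<or> C \<inter> F \<noteq> {} \<or>
      D \<inter> F \<noteq> {} \<or> E \<inter> G \<noteq> {} \<or> F \<inter> G \<noteq> {}"
  proof (rule ccontr)
    assume "\<not> ?thesis"
    then have "\<not> tautological At Ep (mk_rule A B C D E F G)"
      using assms(11,12)
      by (intro not_tautological_mk_rule[OF assms(9) _ _ fresh])
        (auto simp: erule_atoms_mk_rule erule_elits_mk_rule)
    with taut show False by contradiction
  qed
next
  assume "A \<inter> B \<noteq> {} \<or> B \<inter> (C \<union> G) \<noteq> {} \<or> C \<inter> F \<noteq> {} \<or>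
      D \<inter> F \<noteq> {} \<or> E \<inter> G \<noteq> {} \<or> F \<inter> G \<noteq> {}"
  then show "tautological At Ep (mk_rule A B C D E F G)"
    by (intro tautological_if_reduct_redundant answer_sets_insert_mk_rule_redundant)
qed

end
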